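(* Let $Q_{n,m}$ be as defined in the context. Every code of $Q_{n,m}$ has dimension at most $\lceil n/(m+1)\rceil$.
   Context: A quantum graph $G$ consists of a finite-dimensional complex inner product space $V(G)$ and a real vector space $E(G)$ of self-adjoint operators on $V(G)$ containing the identity $I$; write $|G|=\dim V(G)$ and $\|G\|=\dim E(G)-1$. A code of $G$ is a subspace $C\subseteq V(G)$ such that there is a function $\epsilon_C:E(G)\to\mathbb{R}$ with $P_CAP_C=\epsilon_C(A)P_C$ for all $A\in E(G)$, where $P_C$ is the orthogonal projection onto $C$. Let $n\ge 2$ and $1\le m\le n-1$ be integers. $Q_{n,m}$ denotes any quantum graph with $|Q_{n,m}|=n$, $\|Q_{n,m}\|=m$, such that: (i) $E(Q_{n,m})$ is commutative; (ii) (tropical) $E(Q_{n,m})$ has a basis $\{I,A_1,\dots,A_m\}$ and there is an orthonormal basis of $V(Q_{n,m})$ of common eigenvectors of the $A_i$ such that, writing the eigenvalues of $A_i$ in decreasing order $\lambda_{i,1},\dots,\lambda_{i,n}$ with corresponding common eigenvectors $w_{i,1},\dots,w_{i,n}$, one has $0<\lambda_{i,j+1}<\lambda_{i,j}/n^2$ for all $i$ and $1\le j<n$; (iii) (cyclical) for $1\le i<m$ and all $j$, $w_{i+1,j}=w_{i,j+s_i}$, with the second index taken modulo $n$ in $\{1,\dots,n\}$, where $s_i=\lfloor n/m\rfloor+1$ if $1\le i\le (n\bmod m)$ and $s_i=\lfloor n/m\rfloor$ otherwise; (iv) the common eigenvectors are enumerated as $w_1,\dots,w_n$ (each common eigenvector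 exactly once) so that for every $l\in\{1,\dots,n\}$ one has $w_l=w_{i,\lceil l/m\rceil}$ for some $i\in\{1,\dots,m\}$. *)

theory Defs
  imports "Jordan_Normal_Form.Schur_Decomposition" "Jordan_Normal_Form.VS_Connect"
begin

text \<open>The ambient space V(G) is modelled as C^n = carrier_vec n (complex vectors of
  dimension n) with the standard inner product v \<bullet>c w.\<close>

definition csubspace :: "nat \<Rightarrow> complex vec set \<Rightarrow> bool" where
  "csubspace n C \<longleftrightarrow> VectorSpace.subspace class_ring C (module_vec TYPE(complex) n)"

definition cdim :: "nat \<Rightarrow> complex vec set \<Rightarrow> nat" where
  "cdim n C = vectorspace.dim class_ring ((module_vec TYPE(complex) n)\<lparr>carrier := C\<rparr>)"

definition self_adjoint :: "nat \<Rightarrow> complex mat \<Rightarrow> bool" where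
  "self_adjoint n A \<longleftrightarrow> A \<in> carrier_mat n n \<and> mat_adjoint A = A"

definition is_orth_proj :: "nat \<Rightarrow> complex vec set \<Rightarrow> complex mat \<Rightarrow> bool" where
  "is_orth_proj n C P \<longleftrightarrow> P \<in> carrier_mat n n \<and> P * P = P \<and> mat_adjoint P = P
      \<and> {P *\<^sub>v v | v. v \<in> carrier_vec n} = C"

definition orth_proj :: "nat \<Rightarrow> complex vec set \<Rightarrow> complex mat" where
  "orth_proj n C = (THE P. is_orth_proj n C P)"

definition is_code :: "nat \<Rightarrow> complex mat set \<Rightarrow> complex vec set \<Rightarrow> bool" where
  "is_code n E C \<longleftrightarrow> csubspace n C \<and>
     (\<exists>\<epsilon> :: complex mat \<Rightarrow> real. \<forall>X\<in>E.
        orth_proj n C * X * orth_proj n C = complex_of_real (\<epsilon> X) \<cdot>\<^sub>m orth_proj n C)"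

definition lincomb :: "nat \<Rightarrow> (nat \<Rightarrow> complex mat) \<Rightarrow> nat \<Rightarrow> (nat \<Rightarrow> real) \<Rightarrow> complex mat" where
  "lincomb n A m c = mat n n (\<lambda>(r,s). complex_of_real (c 0) * (1\<^sub>m n) $$ (r,s)
       + (\<Sum>i=1..m. complex_of_real (c i) * A i $$ (r,s)))"

definition span_E :: "nat \<Rightarrow> (nat \<Rightarrow> complex mat) \<Rightarrow> nat \<Rightarrow> complex mat set" where
  "span_E n A m = {lincomb n A m c | c. True}"

definition shift :: "nat \<Rightarrow> nat \<Rightarrow> nat \<Rightarrow> nat" where
  "shift n m i = (if 1 \<le> i \<and> i \<le> n mod m then n div m + 1 else n div m)"

end

theory Submission
  imports Defs "Jordan_Normal_Form.DL_Rank"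
begin

text \<open>Let \<open>P\<close> project onto a code \<open>C\<close>. The identity \<open>P A P = \<epsilon>(A) P\<close> says that every
  \<open>v \<in> C\<close> has Rayleigh quotient \<open>\<epsilon>(A)\<close> for every \<open>A\<close> in the edge space. In the common
  eigenbasis \<open>b\<close>, with weights \<open>p l = |\<langle>v, b l\<rangle>|\<^sup>2\<close>, this reads
  \<open>(\<Sum>l. lam i (r i l) * p l) = \<epsilon> i * (\<Sum>l. p l)\<close>, where \<open>r i l\<close> is the position of \<open>b l\<close> in the
  decreasing order of the eigenvalues of \<open>A i\<close>. Suppose \<open>dim C > K = \<lceil>n / (m + 1)\<rceil>\<close>.
  A nonzero \<open>v \<in> C\<close> orthogonal to the \<open>K\<close> leading eigenvectors of \<open>A i\<close> gives
  \<open>\<epsilon> i \<le> lam i (K + 1) < lam i K / n\<^sup>2\<close>, hence \<open>n * \<epsilon> i < lam i K\<close>, for every \<open>i\<close>.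
  A nonzero \<open>v \<in> C\<close> orthogonal to the \<open>n - m K \<le> K\<close> vectors \<open>b l\<close> with \<open>l > m K\<close> has a
  coordinate \<open>l\<^sub>0 \<le> m K\<close> carrying at least \<open>1/n\<close> of its total weight; by the enumeration,
  \<open>b l\<^sub>0\<close> is among the \<open>K\<close> leading eigenvectors of some \<open>A i\<close>, which gives
  \<open>n * \<epsilon> i \<ge> lam i K\<close>.\<close>

section \<open>Adjoints\<close>

lemma mat_adjoint_dim [simp]:
  "dim_row (mat_adjoint A) = dim_col A" "dim_col (mat_adjoint A) = dim_row A"
  unfolding mat_adjoint_def by auto

lemma mat_adjoint_index [simp]:
  "i < dim_col A \<Longrightarrow> j < dim_row A \<Longrightarrow> mat_adjoint A $$ (i, j) = conjugate (A $$ (j, i))"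
  unfolding mat_adjoint_def by (auto simp: mat_of_rows_def)

lemma mat_adjoint_carrier [simp]: "A \<in> carrier_mat n k \<Longrightarrow> mat_adjoint A \<in> carrier_mat k n"
  by auto

lemma mat_adjoint_adjoint:
  assumes "A \<in> carrier_mat n k"
  shows "mat_adjoint (mat_adjoint A) = A"
  by (rule eq_matI) (use assms in auto)

lemma mat_adjoint_mult:
  assumes A: "(A :: complex mat) \<in> carrier_mat n k" and B: "B \<in> carrier_mat k l"
  shows "mat_adjoint (A * B) = mat_adjoint B * mat_adjoint A"
proof (rule eq_matI)
  fix i j assume "i < dim_row (mat_adjoint B * mat_adjoint A)" "j < dim_col (mat_adjoint B * mat_adjoint A)"
  then have ij: "i < l" "j < n" using A B by auto
  have "mat_adjoint (A * B) $$ (i, j) = (\<Sum>t<k. cnj (A $$ (j, t)) * cnj (B $$ (t, i)))"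
    using A B ij by (simp add: scalar_prod_def lessThan_atLeast0)
  also have "\<dots> = (mat_adjoint B * mat_adjoint A) $$ (i, j)"
    using A B ij by (simp add: scalar_prod_def lessThan_atLeast0 mult.commute)
  finally show "mat_adjoint (A * B) $$ (i, j) = (mat_adjoint B * mat_adjoint A) $$ (i, j)" .
qed (use A B mat_adjoint_carrier[of "A * B" n l] in auto)

lemma mat_adjoint_cscalar_prod:
  assumes A: "(A :: complex mat) \<in> carrier_mat n k"
    and x: "x \<in> carrier_vec k" and y: "y \<in> carrier_vec n"
  shows "(A *\<^sub>v x) \<bullet>c y = x \<bullet>c (mat_adjoint A *\<^sub>v y)"
proof -
  have "(A *\<^sub>v x) \<bullet>c y = (\<Sum>i<n. \<Sum>j<k. A $$ (i, j) * x $ j * cnj (y $ i))"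
    using A x y by (simp add: scalar_prod_def lessThan_atLeast0 sum_distrib_right)
  also have "\<dots> = (\<Sum>j<k. \<Sum>i<n. A $$ (i, j) * x $ j * cnj (y $ i))"
    by (rule sum.swap)
  also have "\<dots> = x \<bullet>c (mat_adjoint A *\<^sub>v y)"
    using A x y
    by (simp add: scalar_prod_def lessThan_atLeast0 sum_distrib_left mult_ac)
  finally show ?thesis .
qed

lemma eq_mat_by_mult_vecI:
  assumes A: "(A :: 'a :: comm_ring_1 mat) \<in> carrier_mat n k" and B: "B \<in> carrier_mat n k"
    and eq: "\<And>v. v \<in> carrier_vec k \<Longrightarrow> A *\<^sub>v v = B *\<^sub>v v"
  shows "A = B"
proof (rule eq_matI)
  fix i j assume i: "i < dim_row B" and j: "j < dim_col B"
  have "A *\<^sub>v unit_vec k j = col A j" "B *\<^sub>v unit_vec k j = col B j"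
    using A B j by (auto intro!: eq_vecI)
  then have "col A j = col B j" using eq[of "unit_vec k j"] by simp
  then show "A $$ (i, j) = B $$ (i, j)" using A B i j by (metis carrier_matD col_def index_vec)
qed (use A B in auto)

section \<open>Orthogonal projections and isometries\<close>

definition mat_range :: "'a :: semiring_0 mat \<Rightarrow> 'a vec set" where
  "mat_range A = {A *\<^sub>v x | x. x \<in> carrier_vec (dim_col A)}"

lemma orth_proj_unique:
  assumes P: "is_orth_proj n C P" and Q: "is_orth_proj n C Q"
  shows "P = Q"
proof -
  have absorb: "X * Y = Y"
    if X: "is_orth_proj n C X" and Y: "is_orth_proj n C Y" for X Y
  proof (rule eq_mat_by_mult_vecI)
    show "X * Y \<in> carrier_mat n n" and Yc: "Y \<in> carrier_mat n n"
      using X Y unfolding is_orth_proj_def by auto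
    fix v :: "complex vec" assume v: "v \<in> carrier_vec n"
    have "Y *\<^sub>v v \<in> C" using Y v unfolding is_orth_proj_def by auto
    then obtain u where u: "u \<in> carrier_vec n" "Y *\<^sub>v v = X *\<^sub>v u"
      using X unfolding is_orth_proj_def by auto
    have Xc: "X \<in> carrier_mat n n" using X unfolding is_orth_proj_def by simp
    have "(X * Y) *\<^sub>v v = X *\<^sub>v (Y *\<^sub>v v)" using Xc Yc v by (simp add: assoc_mult_mat_vec)
    also have "\<dots> = (X * X) *\<^sub>v u" using Xc u by (simp add: assoc_mult_mat_vec)
    also have "\<dots> = Y *\<^sub>v v" using X u unfolding is_orth_proj_def by simp
    finally show "(X * Y) *\<^sub>v v = Y *\<^sub>v v" .
  qed
  have "Q = mat_adjoint (P * Q)" using absorb[OF P Q] Q unfolding is_orth_proj_def by simp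
  also have "\<dots> = Q * P" using P Q mat_adjoint_mult[of P n n Q n] unfolding is_orth_proj_def by simp
  also have "\<dots> = P" using absorb[OF Q P] .
  finally show ?thesis by simp
qed

lemma isometry_is_orth_proj:
  assumes U: "U \<in> carrier_mat n k" and UU: "mat_adjoint U * U = 1\<^sub>m k"
  shows "is_orth_proj n (mat_range U) (U * mat_adjoint U)"
proof -
  have Ua: "mat_adjoint U \<in> carrier_mat k n" using U by simp
  have idem: "U * mat_adjoint U * (U * mat_adjoint U) = U * mat_adjoint U"
    using U UU by (simp add: assoc_mult_mat[of _ n k _ n _ n] assoc_mult_mat[symmetric, of _ k n _ k _ n])
  have "mat_adjoint (U * mat_adjoint U) = U * mat_adjoint U"
    using mat_adjoint_mult[OF U Ua] mat_adjoint_adjoint[OF U] by simp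
  moreover have "{(U * mat_adjoint U) *\<^sub>v v | v. v \<in> carrier_vec n} = mat_range U"
  proof (intro equalityI subsetI)
    fix y assume "y \<in> {(U * mat_adjoint U) *\<^sub>v v | v. v \<in> carrier_vec n}"
    then obtain v where v: "v \<in> carrier_vec n" and y: "y = U *\<^sub>v (mat_adjoint U *\<^sub>v v)"
      using U by (auto simp: assoc_mult_mat_vec[of _ n k _ n])
    have "mat_adjoint U *\<^sub>v v \<in> carrier_vec (dim_col U)"
      using U v by (metis carrier_matD(2) mat_adjoint_carrier mult_mat_vec_carrier)
    then show "y \<in> mat_range U" unfolding mat_range_def using y by blast
  next
    fix y assume "y \<in> mat_range U"
    then obtain x where x: "x \<in> carrier_vec k" "y = U *\<^sub>v x"
      using U unfolding mat_range_def by auto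
    have "(U * mat_adjoint U) *\<^sub>v (U *\<^sub>v x) = U *\<^sub>v (mat_adjoint U *\<^sub>v (U *\<^sub>v x))"
      using U x by (simp add: assoc_mult_mat_vec[OF U Ua])
    also have "mat_adjoint U *\<^sub>v (U *\<^sub>v x) = (mat_adjoint U * U) *\<^sub>v x"
      by (rule assoc_mult_mat_vec[symmetric, OF Ua U x(1)])
    finally have "y = (U * mat_adjoint U) *\<^sub>v y" using UU x by simp
    moreover have "y \<in> carrier_vec n" using U x by simp
    ultimately show "y \<in> {(U * mat_adjoint U) *\<^sub>v v | v. v \<in> carrier_vec n}" by blast
  qed
  ultimately show ?thesis unfolding is_orth_proj_def using U idem by auto
qed

lemma orth_proj_mat_range:
  assumes "U \<in> carrier_mat n k" and "mat_adjoint U * U = 1\<^sub>m k"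
  shows "orth_proj n (mat_range U) = U * mat_adjoint U"
  unfolding orth_proj_def using isometry_is_orth_proj[OF assms] orth_proj_unique by blast

lemma mat_range_mult_subset:
  assumes A: "A \<in> carrier_mat n k" and B: "B \<in> carrier_mat k l"
  shows "mat_range (A * B) \<subseteq> mat_range A"
proof
  fix y assume "y \<in> mat_range (A * B)"
  then obtain x where x: "x \<in> carrier_vec l" and y: "y = A *\<^sub>v (B *\<^sub>v x)"
    using A B unfolding mat_range_def by (auto simp: assoc_mult_mat_vec)
  have "B *\<^sub>v x \<in> carrier_vec (dim_col A)" using A B x by simp
  then show "y \<in> mat_range A" unfolding mat_range_def using y by blast
qed

lemma mat_range_mult_mat_diag:
  fixes V :: "'a :: field mat"
  assumes V: "V \<in> carrier_mat n k" and s: "\<And>j. j < k \<Longrightarrow> s j \<noteq> 0"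
  shows "mat_range (V * mat_diag k s) = mat_range V"
proof
  show "mat_range (V * mat_diag k s) \<subseteq> mat_range V" by (rule mat_range_mult_subset[OF V mat_diag_dim])
  have "mat_diag k s * mat_diag k (\<lambda>j. 1 / s j) = mat_diag k (\<lambda>j. s j * (1 / s j))"
    by simp
  also have "\<dots> = mat_diag k (\<lambda>_. 1)"
    using s unfolding mat_diag_def by (intro eq_matI) auto
  finally have "V = V * mat_diag k s * mat_diag k (\<lambda>j. 1 / s j)"
    using V by (simp add: assoc_mult_mat[of _ n k _ k _ k])
  then have "mat_range V = mat_range (V * mat_diag k s * mat_diag k (\<lambda>j. 1 / s j))"
    by (rule arg_cong)
  also have "\<dots> \<subseteq> mat_range (V * mat_diag k s)"
    by (rule mat_range_mult_subset[of _ n k _ k]) (use V in auto)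
  finally show "mat_range V \<subseteq> mat_range (V * mat_diag k s)" .
qed

lemma mat_adjoint_mat_diag: "mat_adjoint (mat_diag n f) = mat_diag n (\<lambda>i. cnj (f i))"
  by (rule eq_matI) (auto simp: mat_diag_def)

lemma complex_gt_0_eq_of_real:
  fixes z :: complex
  assumes "0 < z" shows "z = of_real (Re z)" and "0 < Re z"
  using assms by (auto simp: less_complex_def complex_eq_iff)

lemma corthogonal_gram_mat:
  fixes us :: "complex vec list"
  assumes orth: "corthogonal us" and us: "set us \<subseteq> carrier_vec n"
  shows "mat_adjoint (mat_of_cols n us) * mat_of_cols n us
    = mat_diag (length us) (\<lambda>j. us ! j \<bullet>c us ! j)"
proof (rule eq_matI)
  fix i j assume "i < dim_row (mat_diag (length us) (\<lambda>j. us ! j \<bullet>c us ! j))"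
    and "j < dim_col (mat_diag (length us) (\<lambda>j. us ! j \<bullet>c us ! j))"
  then have ij: "i < length us" "j < length us" by (auto simp: mat_diag_def)
  then have "(mat_adjoint (mat_of_cols n us) * mat_of_cols n us) $$ (i, j) = us ! j \<bullet>c us ! i"
    using ij us by (subgoal_tac "us ! i \<in> carrier_vec n")
      (auto simp: scalar_prod_def mat_of_cols_def mult.commute)
  then show "(mat_adjoint (mat_of_cols n us) * mat_of_cols n us) $$ (i, j)
    = mat_diag (length us) (\<lambda>j. us ! j \<bullet>c us ! j) $$ (i, j)"
    using corthogonalD[OF orth ij(2,1)] ij by (auto simp: mat_diag_def)
qed (auto simp: mat_diag_def)

lemma corthogonal_isometry:
  fixes us :: "complex vec list"
  assumes orth: "corthogonal us" and us: "set us \<subseteq> carrier_vec n"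
  obtains U where "U \<in> carrier_mat n (length us)" "mat_adjoint U * U = 1\<^sub>m (length us)"
    "mat_range U = mat_range (mat_of_cols n us)"
proof -
  define k where "k = length us"
  define V where "V = mat_of_cols n us"
  define N where "N j = Re (us ! j \<bullet>c us ! j)" for j
  define s where "s j = complex_of_real (1 / sqrt (N j))" for j
  define U where "U = V * mat_diag k s"
  have V: "V \<in> carrier_mat n k" unfolding V_def k_def by simp
  have U: "U \<in> carrier_mat n k" unfolding U_def using V by simp
  have N: "us ! j \<bullet>c us ! j = of_real (N j)" "0 < N j" if "j < k" for j
  proof -
    have "us ! j \<in> carrier_vec n" "us ! j \<bullet>c us ! j \<noteq> 0"
      using that us corthogonalD[OF orth, of j j] unfolding k_def by auto
    then have "0 < us ! j \<bullet>c us ! j"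
      using conjugate_square_ge_0_vec[of "us ! j"] by (simp add: order_less_le)
    then show "us ! j \<bullet>c us ! j = of_real (N j)" "0 < N j"
      unfolding N_def by (rule complex_gt_0_eq_of_real)+
  qed
  have "mat_adjoint U * U = (mat_diag k (\<lambda>j. cnj (s j)) * mat_adjoint V) * (V * mat_diag k s)"
    unfolding U_def by (simp add: mat_adjoint_mult[OF V mat_diag_dim] mat_adjoint_mat_diag)
  also have "\<dots> = mat_diag k (\<lambda>j. cnj (s j)) * (mat_adjoint V * (V * mat_diag k s))"
    by (rule assoc_mult_mat[of _ k k _ n _ k]) (use V in auto)
  also have "mat_adjoint V * (V * mat_diag k s) = (mat_adjoint V * V) * mat_diag k s"
    by (rule assoc_mult_mat[symmetric, of _ k n _ k _ k]) (use V in auto)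
  also have "mat_adjoint V * V = mat_diag k (\<lambda>j. us ! j \<bullet>c us ! j)"
    unfolding V_def k_def by (rule corthogonal_gram_mat[OF orth us])
  also have "mat_diag k (\<lambda>j. cnj (s j)) * (mat_diag k (\<lambda>j. us ! j \<bullet>c us ! j) * mat_diag k s)
      = mat_diag k (\<lambda>j. cnj (s j) * ((us ! j \<bullet>c us ! j) * s j))"
    by simp
  also have "\<dots> = mat_diag k (\<lambda>_. 1)"
  proof -
    have "cnj (s j) * ((us ! j \<bullet>c us ! j) * s j) = 1" if "j < k" for j
    proof -
      have "1 / sqrt (N j) * (N j * (1 / sqrt (N j))) = 1"
        using N(2)[OF that] by (simp add: field_simps)
      then show ?thesis unfolding s_def N(1)[OF that] by (metis complex_cnj_complex_of_real of_real_1 of_real_mult)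
    qed
    then show ?thesis unfolding mat_diag_def by (intro eq_matI) auto
  qed
  finally have "mat_adjoint U * U = 1\<^sub>m k" by simp
  moreover have "mat_range U = mat_range V"
    unfolding U_def by (rule mat_range_mult_mat_diag[OF V]) (use N(2) in \<open>force simp: s_def\<close>)
  ultimately show ?thesis using that U unfolding k_def V_def by simp
qed

section \<open>Subspaces as ranges of isometries\<close>

lemma csubspace_subset_carrier: "csubspace n C \<Longrightarrow> C \<subseteq> carrier_vec n"
  unfolding csubspace_def VectorSpace.subspace_def submodule_def by (auto simp: module_vec_def)

context fixes n :: nat
begin

interpretation V: vec_space "TYPE(complex)" n .

lemma csubspace_basis:
  assumes "csubspace n C"
  obtains B where "finite B" "B \<subseteq> C" "V.lin_indpt B" "V.span B = C" "cdim n C = card B"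
proof -
  have subs: "VectorSpace.subspace class_ring C V.V" using assms unfolding csubspace_def .
  have submod: "submodule class_ring C V.V" using subs by simp
  have C: "C \<subseteq> carrier_vec n" by (rule csubspace_subset_carrier[OF assms])
  interpret W: vectorspace class_ring "V.vs C" using V.subspace_is_vs[OF subs] .
  have indpt_iff: "W.lin_indpt S \<longleftrightarrow> V.lin_indpt S" if "S \<subseteq> C" for S
    using V.span_li_not_depend(2)[OF that submod] by simp
  let ?P = "\<lambda>S. S \<subseteq> carrier (V.vs C) \<and> W.lin_indpt S"
  have bound: "finite S \<and> card S \<le> n" if "?P S" for S
  proof -
    have "S \<subseteq> C" "V.lin_indpt S" using that indpt_iff by auto
    then show ?thesis using V.li_le_dim[OF V.fin_dim] C V.dim_is_n by auto
  qed
  have "?P {}" unfolding W.lin_dep_def by auto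
  then obtain B where fin: "finite B" and max: "maximal B ?P"
    using maximal_exists[of ?P n "{}", OF bound] by blast
  have BC: "B \<subseteq> C" and indpt: "W.lin_indpt B" using max unfolding maximal_def by auto
  have gen: "W.gen_set B" by (rule W.max_li_is_gen[OF max])
  have "cdim n C = card B"
    unfolding cdim_def using W.dim_basis[OF fin] W.basis_def gen BC indpt by auto
  moreover have "V.span B = C" using V.span_li_not_depend(1)[OF BC submod] gen by simp
  ultimately show ?thesis using that fin BC indpt indpt_iff[OF BC] by blast
qed

end

lemma csubspace_isometry:
  assumes "csubspace n C"
  obtains U where "U \<in> carrier_mat n (cdim n C)" "mat_adjoint U * U = 1\<^sub>m (cdim n C)"
    "C = mat_range U"
proof -
  interpret V: cof_vec_space n "TYPE(complex)" .
  obtain B where fin: "finite B" and BC: "B \<subseteq> C" and indpt: "V.lin_indpt B"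
    and span: "V.span B = C" and dim: "cdim n C = card B"
    using csubspace_basis[OF assms] by blast
  have C: "C \<subseteq> carrier_vec n" by (rule csubspace_subset_carrier[OF assms])
  obtain ws where ws: "set ws = B" "distinct ws" using finite_distinct_list[OF fin] by blast
  define us where "us = gram_schmidt n ws"
  have wsc: "set ws \<subseteq> carrier_vec n" using ws BC C by auto
  note gs = V.gram_schmidt_result[OF wsc ws(2) _ us_def]
  have orth: "corthogonal us" and usc: "set us \<subseteq> carrier_vec n"
    and len: "length us = cdim n C"
    using gs indpt ws dim distinct_card[OF ws(2)] by auto
  have "C = V.col_space (mat_of_cols n us)"
    unfolding V.col_space_def using gs(1) indpt ws span usc by auto
  also have "\<dots> = mat_range (mat_of_cols n us)"
    unfolding V.col_space_eq[OF mat_of_cols_carrier(1)] mat_range_def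
    using mult_mat_vec_carrier[OF mat_of_cols_carrier(1)] by auto
  finally show ?thesis
    using corthogonal_isometry[OF orth usc] that unfolding len by metis
qed

lemma mat_kernel_nonzero_if_wide:
  assumes M: "(M :: complex mat) \<in> carrier_mat r k" and rk: "r < k"
  obtains a where "a \<in> carrier_vec k" "a \<noteq> 0\<^sub>v k" "M *\<^sub>v a = 0\<^sub>v r"
  \<comment> \<open>\<open>lin_depE\<close> needs distinct columns; two equal columns give a kernel vector directly.\<close>
proof (cases "distinct (cols M)")
  case True
  interpret R: vec_space "TYPE(complex)" r .
  have cols: "set (cols M) \<subseteq> carrier_vec r" using M by (auto simp: cols_def)
  have "card (set (cols M)) = k" using True M by (simp add: distinct_card)
  then have "\<not> card (set (cols M)) \<le> R.dim" using R.dim_is_n rk by simp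
  then have "\<not> R.lin_indpt (set (cols M))" using R.li_le_dim(2)[OF R.fin_dim cols] by blast
  then show ?thesis using R.lin_depE[OF M _ True] that by blast
next
  case False
  then obtain i j where ij: "i < k" "j < k" "i \<noteq> j" "cols M ! i = cols M ! j"
    using M by (auto simp: distinct_conv_nth)
  define a :: "complex vec" where "a = unit_vec k i - unit_vec k j"
  have "M *\<^sub>v a = M *\<^sub>v unit_vec k i - M *\<^sub>v unit_vec k j"
    unfolding a_def using M by (simp add: mult_minus_distrib_mat_vec)
  also have "\<dots> = col M i - col M j"
  proof -
    have "M *\<^sub>v unit_vec k l = col M l" if "l < k" for l using M that by (intro eq_vecI) auto
    then show ?thesis using ij by simp
  qed
  also have "\<dots> = 0\<^sub>v r" using M ij by auto
  finally have "M *\<^sub>v a = 0\<^sub>v r" .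
  moreover have "a \<noteq> 0\<^sub>v k"
  proof
    assume "a = 0\<^sub>v k"
    then have "a $ i = 0" using ij by simp
    then show False unfolding a_def using ij by simp
  qed
  moreover have "a \<in> carrier_vec k" unfolding a_def by simp
  ultimately show ?thesis using that by blast
qed

lemma csubspace_orthogonal_vec:
  assumes C: "csubspace n C" and F: "finite F" "F \<subseteq> carrier_vec n" and card: "card F < cdim n C"
  obtains v where "v \<in> C" "v \<noteq> 0\<^sub>v n" "\<And>f. f \<in> F \<Longrightarrow> v \<bullet>c f = 0"
proof -
  define k where "k = cdim n C"
  obtain U where U: "U \<in> carrier_mat n k" and UU: "mat_adjoint U * U = 1\<^sub>m k"
    and CU: "C = mat_range U"
    using csubspace_isometry[OF C] unfolding k_def by blast
  obtain fs where fs: "set fs = F" "distinct fs" using finite_distinct_list[OF F(1)] by blast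
  define Fm where "Fm = mat_of_rows n (map conjugate fs)"
  have Fm: "Fm \<in> carrier_mat (length fs) n"
    unfolding Fm_def using mat_of_rows_carrier(1)[of n "map conjugate fs"] by simp
  have "length fs < k" using card fs unfolding k_def by (metis distinct_card)
  then obtain a where a: "a \<in> carrier_vec k" "a \<noteq> 0\<^sub>v k" and Fa: "(Fm * U) *\<^sub>v a = 0\<^sub>v (length fs)"
    by (rule mat_kernel_nonzero_if_wide[OF mult_carrier_mat[OF Fm U]])
  define v where "v = U *\<^sub>v a"
  have v: "v \<in> carrier_vec n" unfolding v_def using U a by simp
  have a_v: "mat_adjoint U *\<^sub>v v = a"
    unfolding v_def using U a UU by (simp add: assoc_mult_mat_vec[symmetric, of _ k n _ k])
  have "v \<noteq> 0\<^sub>v n"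
  proof
    assume "v = 0\<^sub>v n"
    then have "a = mat_adjoint U *\<^sub>v 0\<^sub>v n" using a_v by simp
    also have "\<dots> = 0\<^sub>v k" using U by (intro eq_vecI) auto
    finally show False using a(2) by simp
  qed
  moreover have "v \<in> C"
    using U a(1) unfolding CU v_def mat_range_def by (metis (mono_tags) carrier_matD(2) mem_Collect_eq)
  moreover have "v \<bullet>c f = 0" if fF: "f \<in> F" for f
  proof -
    obtain t where t: "t < length fs" "fs ! t = f" using fF fs by (auto simp: in_set_conv_nth)
    have f: "f \<in> carrier_vec n" using fF F by auto
    have "v \<bullet>c f = row Fm t \<bullet> v"
      unfolding Fm_def using t f by (simp add: conjugate_vec_sprod_comm[OF v f])
    also have "\<dots> = (Fm *\<^sub>v v) $ t" using Fm t by simp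
    also have "Fm *\<^sub>v v = (Fm * U) *\<^sub>v a"
      unfolding v_def using Fm U a(1) by (rule assoc_mult_mat_vec[symmetric])
    finally show ?thesis using Fa t by simp
  qed
  ultimately show ?thesis using that by blast
qed

section \<open>Quadratic forms\<close>

lemma orthonormal_mat_unitary:
  fixes bb :: "nat \<Rightarrow> complex vec"
  assumes bb: "\<And>l. l < n \<Longrightarrow> bb l \<in> carrier_vec n"
    and orthonormal: "\<And>l l'. l < n \<Longrightarrow> l' < n \<Longrightarrow> bb l \<bullet>c bb l' = (if l = l' then 1 else 0)"
  defines "B \<equiv> mat n n (\<lambda>(s, l). bb l $ s)"
  shows "mat_adjoint B * B = 1\<^sub>m n" and "B * mat_adjoint B = 1\<^sub>m n"
proof -
  have B: "B \<in> carrier_mat n n" and Ba: "mat_adjoint B \<in> carrier_mat n n" unfolding B_def by auto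
  show BaB: "mat_adjoint B * B = 1\<^sub>m n"
  proof (rule eq_matI)
    fix i j assume "i < dim_row (1\<^sub>m n)" "j < dim_col (1\<^sub>m n)"
    then have ij: "i < n" "j < n" by auto
    have "(mat_adjoint B * B) $$ (i, j) = bb j \<bullet>c bb i"
      using ij bb[OF ij(1)] bb[OF ij(2)] by (simp add: B_def scalar_prod_def mult.commute)
    then show "(mat_adjoint B * B) $$ (i, j) = 1\<^sub>m n $$ (i, j)" using orthonormal ij by auto
  qed (use B in auto)
  then show "B * mat_adjoint B = 1\<^sub>m n" by (rule mat_mult_left_right_inverse[OF Ba B])
qed

lemma quadratic_form_eigenbasis:
  fixes bb :: "nat \<Rightarrow> complex vec" and \<mu> :: "nat \<Rightarrow> real"
  assumes bb: "\<And>l. l < n \<Longrightarrow> bb l \<in> carrier_vec n"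
    and orthonormal: "\<And>l l'. l < n \<Longrightarrow> l' < n \<Longrightarrow> bb l \<bullet>c bb l' = (if l = l' then 1 else 0)"
    and A: "A \<in> carrier_mat n n"
    and eigen: "\<And>l. l < n \<Longrightarrow> A *\<^sub>v bb l = complex_of_real (\<mu> l) \<cdot>\<^sub>v bb l"
    and v: "v \<in> carrier_vec n"
  shows "(A *\<^sub>v v) \<bullet>c v = complex_of_real (\<Sum>l<n. \<mu> l * (cmod (v \<bullet>c bb l))\<^sup>2)"
proof -
  define B where "B = mat n n (\<lambda>(s, l). bb l $ s)"
  define D where "D = mat_diag n (\<lambda>l. complex_of_real (\<mu> l))"
  define y where "y = mat_adjoint B *\<^sub>v v"
  have B: "B \<in> carrier_mat n n" and Ba: "mat_adjoint B \<in> carrier_mat n n"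
    and D: "D \<in> carrier_mat n n" unfolding B_def D_def by auto
  have y: "y \<in> carrier_vec n" unfolding y_def using Ba v by simp
  have col_B: "col B l = bb l" if "l < n" for l
    using that bb[OF that] unfolding B_def by (intro eq_vecI) auto
  have BaB: "mat_adjoint B * B = 1\<^sub>m n" and BB: "B * mat_adjoint B = 1\<^sub>m n"
    using orthonormal_mat_unitary[OF bb orthonormal] unfolding B_def by auto
  have AB: "A * B = B * D"
  proof (rule eq_matI)
    fix s l assume "s < dim_row (B * D)" "l < dim_col (B * D)"
    then have sl: "s < n" "l < n" using B D by auto
    have "(A * B) $$ (s, l) = (A *\<^sub>v bb l) $ s" using A B sl col_B by simp
    also have "\<dots> = (B * D) $$ (s, l)"
      using sl bb[OF sl(2)] eigen unfolding D_def mat_diag_mult_right[OF B] by (simp add: B_def mult.commute)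
    finally show "(A * B) $$ (s, l) = (B * D) $$ (s, l)" .
  qed (use A B D in auto)
  have vy: "v = B *\<^sub>v y"
    unfolding y_def using B Ba v by (simp add: BB assoc_mult_mat_vec[symmetric, of _ n n _ n])
  have "A *\<^sub>v v = (A * B) *\<^sub>v y" using A B y vy by simp
  also have "\<dots> = B *\<^sub>v (D *\<^sub>v y)" unfolding AB using B D y by simp
  finally have "(A *\<^sub>v v) \<bullet>c v = (B *\<^sub>v (D *\<^sub>v y)) \<bullet>c (B *\<^sub>v y)" using vy by simp
  also have "\<dots> = (D *\<^sub>v y) \<bullet>c (mat_adjoint B *\<^sub>v (B *\<^sub>v y))"
    by (rule mat_adjoint_cscalar_prod[OF B]) (use B D y in auto)
  also have "mat_adjoint B *\<^sub>v (B *\<^sub>v y) = y"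
    using BaB B Ba y by (simp add: assoc_mult_mat_vec[symmetric, of _ n n _ n])
  also have "(D *\<^sub>v y) \<bullet>c y = (\<Sum>l<n. complex_of_real (\<mu> l) * (y $ l * cnj (y $ l)))"
    using y by (simp add: D_def mat_diag_def scalar_prod_def lessThan_atLeast0 mult.assoc
        if_distrib[where f = "\<lambda>x. x * z" for z] cong: if_cong)
  also have "\<dots> = complex_of_real (\<Sum>l<n. \<mu> l * (cmod (v \<bullet>c bb l))\<^sup>2)"
  proof -
    have "y $ l = v \<bullet>c bb l" if "l < n" for l
      using that v bb[OF that] Ba unfolding y_def by (simp add: B_def scalar_prod_def mult.commute)
    then show ?thesis by (simp add: complex_norm_square[symmetric])
  qed
  finally show ?thesis .
qed

lemma is_code_quadratic_form:
  assumes "is_code n E C"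
  obtains \<epsilon> :: "complex mat \<Rightarrow> real"
  where "\<And>X v. X \<in> E \<Longrightarrow> X \<in> carrier_mat n n \<Longrightarrow> v \<in> C \<Longrightarrow>
    (X *\<^sub>v v) \<bullet>c v = complex_of_real (\<epsilon> X) * (v \<bullet>c v)"
proof -
  obtain \<epsilon> where \<epsilon>: "\<And>X. X \<in> E \<Longrightarrow>
      orth_proj n C * X * orth_proj n C = complex_of_real (\<epsilon> X) \<cdot>\<^sub>m orth_proj n C"
    using assms unfolding is_code_def by blast
  obtain U where U: "U \<in> carrier_mat n (cdim n C)" "mat_adjoint U * U = 1\<^sub>m (cdim n C)"
    and C: "C = mat_range U"
    using csubspace_isometry assms unfolding is_code_def by blast
  define P where "P = orth_proj n C"
  have "is_orth_proj n C P"
    unfolding P_def C orth_proj_mat_range[OF U] by (rule isometry_is_orth_proj[OF U])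
  then have P: "P \<in> carrier_mat n n" and PP: "P * P = P" and Pa: "mat_adjoint P = P"
    and range: "C = {P *\<^sub>v w | w. w \<in> carrier_vec n}"
    unfolding is_orth_proj_def by auto
  have "(X *\<^sub>v v) \<bullet>c v = complex_of_real (\<epsilon> X) * (v \<bullet>c v)"
    if X: "X \<in> E" "X \<in> carrier_mat n n" and vC: "v \<in> C" for X v
  proof -
    obtain w where w: "w \<in> carrier_vec n" and vw: "v = P *\<^sub>v w" using vC range by auto
    have v: "v \<in> carrier_vec n" using P w vw by simp
    have Pv: "P *\<^sub>v v = v" using P w vw PP by (simp add: assoc_mult_mat_vec[symmetric])
    have "(X *\<^sub>v v) \<bullet>c v = (P *\<^sub>v (X *\<^sub>v (P *\<^sub>v v))) \<bullet>c v"
      using mat_adjoint_cscalar_prod[OF P, of "X *\<^sub>v v" v] P X v Pa Pv by simp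
    also have "P *\<^sub>v (X *\<^sub>v (P *\<^sub>v v)) = (P * X * P) *\<^sub>v v"
    proof -
      have "(P * X * P) *\<^sub>v v = (P * X) *\<^sub>v (P *\<^sub>v v)"
        by (rule assoc_mult_mat_vec) (use P X v in auto)
      also have "\<dots> = P *\<^sub>v (X *\<^sub>v (P *\<^sub>v v))"
        by (rule assoc_mult_mat_vec) (use P X v in auto)
      finally show ?thesis by simp
    qed
    also have "\<dots> = complex_of_real (\<epsilon> X) \<cdot>\<^sub>v (P *\<^sub>v v)"
      using \<epsilon>[OF X(1)] P v unfolding P_def[symmetric] by (intro eq_vecI) auto
    also have "\<dots> = complex_of_real (\<epsilon> X) \<cdot>\<^sub>v v" using Pv by simp
    finally show ?thesis using v by simp
  qed
  then show ?thesis using that by blast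
qed

section \<open>The dimension bound\<close>

lemma generator_in_span_E:
  assumes i: "i \<in> {1..m}" and A: "A i \<in> carrier_mat n n"
  shows "A i \<in> span_E n A m"
proof -
  have "lincomb n A m (\<lambda>t. if t = i then 1 else 0) = A i"
  proof (rule eq_matI)
    fix r s assume "r < dim_row (A i)" "s < dim_col (A i)"
    then have rs: "r < n" "s < n" using A by auto
    have "(\<Sum>t=1..m. complex_of_real (if t = i then 1 else 0) * A t $$ (r, s))
        = (\<Sum>t=1..m. if t = i then A i $$ (r, s) else 0)"
      by (intro sum.cong) auto
    also have "\<dots> = A i $$ (r, s)" using i by simp
    finally show "lincomb n A m (\<lambda>t. if t = i then 1 else 0) $$ (r, s) = A i $$ (r, s)"
      using rs i unfolding lincomb_def by auto
  qed (use A in \<open>auto simp: lincomb_def\<close>)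
  then show ?thesis unfolding span_E_def by (metis (mono_tags, lifting) mem_Collect_eq)
qed

lemma nat_ceiling_divide_le_iff:
  assumes "0 < d" shows "nat \<lceil>real a / real d\<rceil> \<le> K \<longleftrightarrow> a \<le> d * K"
proof -
  have "nat \<lceil>real a / real d\<rceil> \<le> K \<longleftrightarrow> real a / real d \<le> real K"
    by (simp add: nat_le_iff ceiling_le_iff)
  also have "\<dots> \<longleftrightarrow> a \<le> d * K"
    using assms by (simp add: divide_le_eq mult.commute flip: of_nat_mult)
  finally show ?thesis .
qed

lemma ex_sum_le_card_mult:
  fixes f :: "'a \<Rightarrow> real"
  assumes "finite I" "I \<noteq> {}"
  obtains l where "l \<in> I" "sum f I \<le> real (card I) * f l"
proof -
  have "Max (f ` I) \<in> f ` I" using assms by simp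
  then obtain l where l: "l \<in> I" "f l = Max (f ` I)" by auto
  have "sum f I \<le> real (card I) * f l"
    by (rule sum_bounded_above) (use assms l in auto)
  then show ?thesis using that l by blast
qed

locale tropical_qgraph =
  fixes n m :: nat and A :: "nat \<Rightarrow> complex mat" and b :: "nat \<Rightarrow> complex vec"
    and w :: "nat \<Rightarrow> nat \<Rightarrow> complex vec" and lam :: "nat \<Rightarrow> nat \<Rightarrow> real"
  assumes n_ge_2: "2 \<le> n" and m_pos: "0 < m"
    and A_carrier: "\<And>i. i \<in> {1..m} \<Longrightarrow> A i \<in> carrier_mat n n"
    and b_carrier: "\<And>l. l \<in> {1..n} \<Longrightarrow> b l \<in> carrier_vec n"
    and b_orthonormal: "\<And>l l'. l \<in> {1..n} \<Longrightarrow> l' \<in> {1..n} \<Longrightarrow>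
      b l \<bullet>c b l' = (if l = l' then 1 else 0)"
    and w_bij: "\<And>i. i \<in> {1..m} \<Longrightarrow> bij_betw (w i) {1..n} (b ` {1..n})"
    and w_eigen: "\<And>i j. i \<in> {1..m} \<Longrightarrow> j \<in> {1..n} \<Longrightarrow>
      A i *\<^sub>v w i j = complex_of_real (lam i j) \<cdot>\<^sub>v w i j"
    and lam_tropical: "\<And>i j. i \<in> {1..m} \<Longrightarrow> 1 \<le> j \<Longrightarrow> j < n \<Longrightarrow>
      0 < lam i (j + 1) \<and> lam i (j + 1) < lam i j / (real n)\<^sup>2"
    and b_enum: "\<And>l. l \<in> {1..n} \<Longrightarrow> \<exists>i\<in>{1..m}. b l = w i (nat \<lceil>real l / real m\<rceil>)"
begin

definition eigen_position :: "nat \<Rightarrow> nat \<Rightarrow> nat" where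
  "eigen_position i l = the_inv_into {1..n} (w i) (b l)"

definition weight :: "complex vec \<Rightarrow> nat \<Rightarrow> real" where
  "weight v l = (cmod (v \<bullet>c b l))\<^sup>2"

lemma inj_on_b: "inj_on b {1..n}"
proof (rule inj_onI)
  fix l l' assume l: "l \<in> {1..n}" and l': "l' \<in> {1..n}" and eq: "b l = b l'"
  have "b l \<bullet>c b l' = 1" using b_orthonormal[OF l l] eq by simp
  then show "l = l'" using b_orthonormal[OF l l'] by (metis zero_neq_one)
qed

lemma eigen_position:
  assumes i: "i \<in> {1..m}" and l: "l \<in> {1..n}"
  shows "eigen_position i l \<in> {1..n}" and "w i (eigen_position i l) = b l"
  using bij_betw_apply[OF bij_betw_the_inv_into[OF w_bij[OF i]]] f_the_inv_into_f_bij_betw[OF w_bij[OF i]] l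
  unfolding eigen_position_def by auto

lemma eigen_position_eqI:
  assumes "i \<in> {1..m}" "j \<in> {1..n}" "w i j = b l"
  shows "eigen_position i l = j"
  using assms the_inv_into_f_f[OF bij_betw_imp_inj_on[OF w_bij]] unfolding eigen_position_def by metis

lemma inj_on_eigen_position:
  assumes i: "i \<in> {1..m}" shows "inj_on (eigen_position i) {1..n}"
proof (rule inj_onI)
  fix l l' assume "l \<in> {1..n}" "l' \<in> {1..n}" "eigen_position i l = eigen_position i l'"
  then show "l = l'" using eigen_position(2)[OF i] inj_on_b by (metis inj_onD)
qed

lemma b_eigen:
  assumes "i \<in> {1..m}" "l \<in> {1..n}"
  shows "A i *\<^sub>v b l = complex_of_real (lam i (eigen_position i l)) \<cdot>\<^sub>v b l"
  using w_eigen[OF assms(1) eigen_position(1)[OF assms]] eigen_position(2)[OF assms] by simp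

lemma lam_pos:
  assumes i: "i \<in> {1..m}" and j: "j \<in> {1..n}" shows "0 < lam i j"
proof (cases "j = 1")
  case True
  have "0 < lam i (1 + 1) \<and> lam i (1 + 1) < lam i 1 / (real n)\<^sup>2"
    using lam_tropical[OF i, of 1] n_ge_2 by auto
  then have "0 < lam i 1 / (real n)\<^sup>2" by linarith
  then show ?thesis using True by (simp add: zero_less_divide_iff)
next
  case False
  then show ?thesis using lam_tropical[OF i, of "j - 1"] j by auto
qed

lemma lam_antimono:
  assumes i: "i \<in> {1..m}" and "1 \<le> j" "j \<le> j'" "j' \<le> n"
  shows "lam i j' \<le> lam i j"
  using assms(3,4)
proof (induction j' rule: dec_induct)
  case (step k)
  have "lam i (k + 1) < lam i k / (real n)\<^sup>2" using lam_tropical[OF i] assms(2) step by auto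
  also have "\<dots> \<le> lam i k"
  proof -
    have "1 \<le> (real n)\<^sup>2" using n_ge_2 by (simp add: one_le_power)
    then show ?thesis
      using mult_left_mono[of 1 "(real n)\<^sup>2" "lam i k"] lam_pos[OF i, of k] assms(2) step
      by (simp add: divide_le_eq)
  qed
  finally show ?case using step by simp
qed simp

lemma quadratic_form_weights:
  assumes X: "X \<in> carrier_mat n n"
    and eigen: "\<And>l. l \<in> {1..n} \<Longrightarrow> X *\<^sub>v b l = complex_of_real (\<mu> l) \<cdot>\<^sub>v b l"
    and v: "v \<in> carrier_vec n"
  shows "(X *\<^sub>v v) \<bullet>c v = complex_of_real (\<Sum>l=1..n. \<mu> l * weight v l)"
proof -
  have "(X *\<^sub>v v) \<bullet>c v = complex_of_real (\<Sum>l<n. \<mu> (Suc l) * (cmod (v \<bullet>c b (Suc l)))\<^sup>2)"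
    by (rule quadratic_form_eigenbasis[OF _ _ X _ v]) (use b_carrier b_orthonormal eigen in auto)
  then show ?thesis by (simp add: weight_def sum.atLeast1_atMost_eq)
qed

lemma norm_weights:
  assumes "v \<in> carrier_vec n" shows "v \<bullet>c v = complex_of_real (\<Sum>l=1..n. weight v l)"
  using quadratic_form_weights[of "1\<^sub>m n" "\<lambda>_. 1" v] assms b_carrier by simp

lemma weight_sum_pos:
  assumes "v \<in> carrier_vec n" "v \<noteq> 0\<^sub>v n" shows "0 < (\<Sum>l=1..n. weight v l)"
proof -
  have "0 < v \<bullet>c v" using assms by simp
  then show ?thesis using norm_weights[OF assms(1)] by (simp add: less_complex_def)
qed

lemma weight_sum_eigenvalues:
  assumes i: "i \<in> {1..m}" and v: "v \<in> carrier_vec n"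
    and e: "(A i *\<^sub>v v) \<bullet>c v = complex_of_real e * (v \<bullet>c v)"
  shows "(\<Sum>l=1..n. lam i (eigen_position i l) * weight v l) = e * (\<Sum>l=1..n. weight v l)"
proof -
  have "(A i *\<^sub>v v) \<bullet>c v = complex_of_real (\<Sum>l=1..n. lam i (eigen_position i l) * weight v l)"
    by (rule quadratic_form_weights[OF A_carrier[OF i] b_eigen[OF i] v])
  then show ?thesis using e norm_weights[OF v] by (metis of_real_eq_iff of_real_mult)
qed

lemma code_vec_vanishing_weights:
  assumes C: "csubspace n C" and Z: "Z \<subseteq> {1..n}" "card Z < cdim n C"
  obtains v where "v \<in> C" "v \<noteq> 0\<^sub>v n" "\<And>l. l \<in> Z \<Longrightarrow> weight v l = 0"
proof -
  have fin: "finite (b ` Z)" using finite_subset[OF Z(1)] by simp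
  have sub: "b ` Z \<subseteq> carrier_vec n" using Z(1) b_carrier by auto
  have "card (b ` Z) < cdim n C" using Z card_image_le[of Z b] finite_subset[OF Z(1)] by simp
  then obtain v where "v \<in> C" "v \<noteq> 0\<^sub>v n" "\<And>f. f \<in> b ` Z \<Longrightarrow> v \<bullet>c f = 0"
    using csubspace_orthogonal_vec[OF C fin sub] by blast
  then show ?thesis using that unfolding weight_def by simp
qed

lemma eigen_term_le_sum:
  assumes i: "i \<in> {1..m}" and l0: "l0 \<in> {1..n}"
  shows "lam i (eigen_position i l0) * weight v l0
    \<le> (\<Sum>l=1..n. lam i (eigen_position i l) * weight v l)"
proof (rule member_le_sum)
  fix l assume "l \<in> {1..n} - {l0}"
  then have "0 < lam i (eigen_position i l)" using lam_pos[OF i eigen_position(1)[OF i]] by simp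
  then show "0 \<le> lam i (eigen_position i l) * weight v l" by (simp add: weight_def less_imp_le)
qed (use l0 in simp_all)

lemma eigen_sum_le_beyond:
  assumes i: "i \<in> {1..m}"
    and vanish: "\<And>l. l \<in> {1..n} \<Longrightarrow> eigen_position i l \<le> K \<Longrightarrow> weight v l = 0"
  shows "(\<Sum>l=1..n. lam i (eigen_position i l) * weight v l) \<le> lam i (K + 1) * (\<Sum>l=1..n. weight v l)"
proof -
  have "(\<Sum>l=1..n. lam i (eigen_position i l) * weight v l) \<le> (\<Sum>l=1..n. lam i (K + 1) * weight v l)"
  proof (rule sum_mono)
    fix l assume l: "l \<in> {1..n}"
    show "lam i (eigen_position i l) * weight v l \<le> lam i (K + 1) * weight v l"
    proof (cases "eigen_position i l \<le> K")
      case False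
      then have "lam i (eigen_position i l) \<le> lam i (K + 1)"
        using eigen_position(1)[OF i l] by (intro lam_antimono[OF i]) auto
      then show ?thesis by (simp add: mult_right_mono weight_def)
    qed (use vanish[OF l] in simp)
  qed
  then show ?thesis by (simp add: sum_distrib_left)
qed

lemma code_value_lt_eigenvalue:
  assumes C: "csubspace n C" and i: "i \<in> {1..m}" and K: "1 \<le> K" "K < cdim n C"
    and e: "\<And>v. v \<in> C \<Longrightarrow> (A i *\<^sub>v v) \<bullet>c v = complex_of_real e * (v \<bullet>c v)"
  shows "real n * e < lam i K"
proof -
  define Z where "Z = {l \<in> {1..n}. eigen_position i l \<le> K}"
  have Z: "Z \<subseteq> {1..n}" unfolding Z_def by blast
  have "eigen_position i ` Z \<subseteq> {1..K}" using eigen_position(1)[OF i] unfolding Z_def by force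
  then have "card Z \<le> card {1..K}"
    using card_inj_on_le[OF inj_on_subset[OF inj_on_eigen_position[OF i] Z]] by blast
  then have "card Z < cdim n C" using K(2) by simp
  with Z obtain v where vC: "v \<in> C" and v0: "v \<noteq> 0\<^sub>v n" and vZ: "\<And>l. l \<in> Z \<Longrightarrow> weight v l = 0"
    by (rule code_vec_vanishing_weights[OF C]) blast
  have v: "v \<in> carrier_vec n" using vC csubspace_subset_carrier[OF C] by auto
  define S where "S = (\<Sum>l=1..n. weight v l)"
  have S: "0 < S" unfolding S_def by (rule weight_sum_pos[OF v v0])
  then have "(\<Sum>l=1..n. weight v l) \<noteq> 0" unfolding S_def by simp
  then obtain l1 where l1: "l1 \<in> {1..n}" "weight v l1 \<noteq> 0"
    by (rule sum.not_neutral_contains_not_neutral)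
  then have "l1 \<notin> Z" using vZ by blast
  then have "K < eigen_position i l1" "eigen_position i l1 \<le> n"
    using l1(1) eigen_position(1)[OF i l1(1)] unfolding Z_def by auto
  then have "K < n" by simp
  have "e * S = (\<Sum>l=1..n. lam i (eigen_position i l) * weight v l)"
    unfolding S_def using weight_sum_eigenvalues[OF i v e[OF vC]] by simp
  also have "\<dots> \<le> lam i (K + 1) * S"
    unfolding S_def by (rule eigen_sum_le_beyond[OF i]) (simp add: vZ Z_def)
  finally have "e \<le> lam i (K + 1)" using S by (simp add: mult_le_cancel_right_pos)
  have n: "0 < real n" using n_ge_2 by simp
  have "real n * e \<le> real n * lam i (K + 1)" using \<open>e \<le> lam i (K + 1)\<close> n by simp
  also have "\<dots> < real n * (lam i K / (real n)\<^sup>2)"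
    using lam_tropical[OF i K(1) \<open>K < n\<close>] n by (intro mult_strict_left_mono) auto
  also have "\<dots> = lam i K / real n" by (simp add: power2_eq_square)
  also have "\<dots> \<le> lam i K"
    using lam_pos[OF i, of K] K(1) \<open>K < n\<close> n_ge_2 by (simp add: divide_le_eq)
  finally show ?thesis .
qed

lemma code_value_ge_eigenvalue:
  assumes C: "csubspace n C" and K: "n \<le> (m + 1) * K" "K \<le> n" "K < cdim n C"
    and e: "\<And>i v. i \<in> {1..m} \<Longrightarrow> v \<in> C \<Longrightarrow> (A i *\<^sub>v v) \<bullet>c v = complex_of_real (e i) * (v \<bullet>c v)"
  obtains i where "i \<in> {1..m}" "lam i K \<le> real n * e i"
proof -
  define Z where "Z = {m * K <.. n}"
  have "card Z \<le> K" using K(1) by (simp add: Z_def)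
  then have "Z \<subseteq> {1..n}" "card Z < cdim n C" using K by (auto simp: Z_def)
  then obtain v where vC: "v \<in> C" and v0: "v \<noteq> 0\<^sub>v n" and vZ: "\<And>l. l \<in> Z \<Longrightarrow> weight v l = 0"
    by (rule code_vec_vanishing_weights[OF C]) blast
  have v: "v \<in> carrier_vec n" using vC csubspace_subset_carrier[OF C] by auto
  define S where "S = (\<Sum>l=1..n. weight v l)"
  have S: "0 < S" unfolding S_def by (rule weight_sum_pos[OF v v0])
  obtain l0 where l0: "l0 \<in> {1..n}" and S_le: "S \<le> real n * weight v l0"
    using ex_sum_le_card_mult[of "{1..n}" "weight v"] n_ge_2 unfolding S_def by auto
  then have "weight v l0 \<noteq> 0" using S by auto
  then have "l0 \<notin> Z" using vZ by blast
  then have "l0 \<le> m * K" using l0 unfolding Z_def by auto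
  obtain i where i: "i \<in> {1..m}" and b_l0: "b l0 = w i (nat \<lceil>real l0 / real m\<rceil>)"
    using b_enum[OF l0] by blast
  define j0 where "j0 = nat \<lceil>real l0 / real m\<rceil>"
  have "\<not> j0 \<le> 0" "j0 \<le> K"
    using nat_ceiling_divide_le_iff[OF m_pos, of l0 0] nat_ceiling_divide_le_iff[OF m_pos, of l0 K]
      l0 \<open>l0 \<le> m * K\<close>
    unfolding j0_def by simp_all
  then have "1 \<le> j0" "j0 \<le> K" by simp_all
  then have position_l0: "eigen_position i l0 = j0" using eigen_position_eqI[OF i] b_l0 K(2) unfolding j0_def by auto
  have "lam i K * weight v l0 \<le> lam i (eigen_position i l0) * weight v l0"
    unfolding position_l0 using lam_antimono[OF i \<open>1 \<le> j0\<close> \<open>j0 \<le> K\<close> K(2)]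
    by (simp add: mult_right_mono weight_def)
  also have "\<dots> \<le> (\<Sum>l=1..n. lam i (eigen_position i l) * weight v l)"
    by (rule eigen_term_le_sum[OF i l0])
  also have "\<dots> = e i * S"
    unfolding S_def using weight_sum_eigenvalues[OF i v e[OF i vC]] by simp
  finally have "real n * (lam i K * weight v l0) \<le> real n * (e i * S)"
    by (rule mult_left_mono) simp
  then have "lam i K * (real n * weight v l0) \<le> real n * e i * S" by (simp add: algebra_simps)
  moreover have "lam i K * S \<le> lam i K * (real n * weight v l0)"
    using S_le lam_pos[OF i, of K] K(2) \<open>1 \<le> j0\<close> \<open>j0 \<le> K\<close> by (simp add: mult_left_mono)
  ultimately have "lam i K * S \<le> real n * e i * S" by linarith
  then show ?thesis using that[OF i] S by simp
qed

theorem code_dim_le: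
  assumes code: "is_code n E C" and gens: "\<And>i. i \<in> {1..m} \<Longrightarrow> A i \<in> E"
  shows "cdim n C \<le> nat \<lceil>real n / real (m + 1)\<rceil>"
proof (rule ccontr)
  define K where "K = nat \<lceil>real n / real (m + 1)\<rceil>"
  assume "\<not> cdim n C \<le> nat \<lceil>real n / real (m + 1)\<rceil>"
  then have K_lt: "K < cdim n C" unfolding K_def by simp
  have C: "csubspace n C" using code unfolding is_code_def by simp
  obtain \<epsilon> where \<epsilon>: "\<And>X v. X \<in> E \<Longrightarrow> X \<in> carrier_mat n n \<Longrightarrow> v \<in> C \<Longrightarrow>
      (X *\<^sub>v v) \<bullet>c v = complex_of_real (\<epsilon> X) * (v \<bullet>c v)"
    by (rule is_code_quadratic_form[OF code]) (rule that)
  have e: "(A i *\<^sub>v v) \<bullet>c v = complex_of_real (\<epsilon> (A i)) * (v \<bullet>c v)"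
    if "i \<in> {1..m}" "v \<in> C" for i v
    by (rule \<epsilon>[OF gens A_carrier]) (use that in auto)
  have K_le_iff: "K \<le> k \<longleftrightarrow> n \<le> (m + 1) * k" for k
    unfolding K_def by (rule nat_ceiling_divide_le_iff) simp
  have K: "n \<le> (m + 1) * K" "K \<le> n" "1 \<le> K"
    using K_le_iff[of K] K_le_iff[of n] K_le_iff[of 0] n_ge_2 by auto
  obtain i where i: "i \<in> {1..m}" and "lam i K \<le> real n * \<epsilon> (A i)"
    by (rule code_value_ge_eigenvalue[OF C K(1,2) K_lt e])
  moreover have "real n * \<epsilon> (A i) < lam i K"
    using code_value_lt_eigenvalue[OF C i K(3) K_lt e[OF i]] .
  ultimately show False by simp
qed

end

theorem proposition1:
  fixes n m :: nat
    and A :: "nat \<Rightarrow> complex mat"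
    and b :: "nat \<Rightarrow> complex vec"
    and w :: "nat \<Rightarrow> nat \<Rightarrow> complex vec"
    and lam :: "nat \<Rightarrow> nat \<Rightarrow> real"
  assumes n2: "n \<ge> 2" and m1: "1 \<le> m" and mn: "m \<le> n - 1"
    and sa: "\<forall>i\<in>{1..m}. self_adjoint n (A i)"
    and basis: "\<forall>c. lincomb n A m c = 0\<^sub>m n n \<longrightarrow> (\<forall>i\<le>m. c i = 0)"
    and comm: "\<forall>i\<in>{1..m}. \<forall>j\<in>{1..m}. A i * A j = A j * A i"
    and onb_car: "\<forall>l\<in>{1..n}. b l \<in> carrier_vec n"
    and onb: "\<forall>l\<in>{1..n}. \<forall>l'\<in>{1..n}. b l \<bullet>c b l' = (if l = l' then 1 else 0)"
    and common: "\<forall>i\<in>{1..m}. \<forall>l\<in>{1..n}. \<exists>\<mu>. A i *\<^sub>v b l = \<mu> \<cdot>\<^sub>v b l"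
    and wperm: "\<forall>i\<in>{1..m}. bij_betw (w i) {1..n} (b ` {1..n})"
    and weig: "\<forall>i\<in>{1..m}. \<forall>j\<in>{1..n}. A i *\<^sub>v w i j = complex_of_real (lam i j) \<cdot>\<^sub>v w i j"
    and trop: "\<forall>i\<in>{1..m}. \<forall>j. 1 \<le> j \<and> j < n \<longrightarrow>
                 0 < lam i (j+1) \<and> lam i (j+1) < lam i j / (real n)^2"
    and cyc: "\<forall>i. 1 \<le> i \<and> i < m \<longrightarrow> (\<forall>j\<in>{1..n}.
                 w (i+1) j = w i ((j + shift n m i - 1) mod n + 1))"
    and enum: "\<forall>l\<in>{1..n}. \<exists>i\<in>{1..m}. b l = w i (nat \<lceil>real l / real m\<rceil>)"
  shows "\<forall>C. is_code n (span_E n A m) C \<longrightarrow> cdim n C \<le> nat \<lceil>real n / real (m+1)\<rceil>"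
proof -
  interpret tropical_qgraph n m A b w lam
    by unfold_locales (use n2 m1 sa onb_car onb wperm weig trop enum in \<open>auto simp: self_adjoint_def\<close>)
  show ?thesis
  proof (intro allI impI)
    fix C assume "is_code n (span_E n A m) C"
    then show "cdim n C \<le> nat \<lceil>real n / real (m + 1)\<rceil>"
      by (rule code_dim_le) (simp add: generator_in_span_E A_carrier)
  qed
qed

end
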